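(* Let $F$ be an absolutely continuous c.d.f. with density $f$ satisfying condition set 1 (defined in the context). Let $i=i(n)$ satisfy $i\to\infty$ and $i/n\to0$ as $n\to\infty$, and define $a_n=F^{-1}\!\left(1-\frac{i}{n}\right)$ and $b_n=\frac{\sqrt{i}}{n f(a_n)}$. Then $\lim_{n\to\infty}\frac{a_n}{b_n}=\infty$.
   Context: Condition set 1: with hazard rate $h(x)\triangleq f(x)/(1-F(x))$, (i) $F^{-1}(1)=\infty$ (the distribution has unbounded support), and (ii) either $\lim_{x\to\infty} x h(x)=c_0$ for some constant $c_0>0$, or $\lim_{x\to\infty}\frac{d}{dx}\frac{1}{h(x)}=0$. *)

theory Defs
  imports "HOL-Analysis.Analysis"
begin

definition quantile :: "(real \<Rightarrow> real) \<Rightarrow> real \<Rightarrow> real" where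
  "quantile F p = Inf {x. p \<le> F x}"

definition hazard :: "(real \<Rightarrow> real) \<Rightarrow> (real \<Rightarrow> real) \<Rightarrow> real \<Rightarrow> real" where
  "hazard f F x = f x / (1 - F x)"

end

theory Submission
  imports Defs
begin

text \<open>
  If \<open>q = i/n\<close> and \<open>a = F\<^sup>-\<^sup>1(1 - q)\<close>, then \<open>1 - F(a) = q\<close>, hence \<open>n f(a) = i h(a)\<close> and
  \<open>a/b = a h(a) \<surd>i\<close>. As \<open>a\<^sub>n \<rightarrow> \<infinity>\<close>, it suffices that \<open>x h(x) \<ge> c > 0\<close> for large \<open>x\<close>.
  Under the first alternative of condition (ii) this is immediate. Under the second,
  \<open>1/h\<close> has derivative tending to 0, so it grows sublinearly: \<open>1/h(x) \<le> x\<close> eventually,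
  i.e. \<open>x h(x) \<ge> 1\<close>. This needs \<open>f > 0\<close> eventually, so that \<open>1/h\<close> really is
  \<open>(1 - F)/f\<close> and not the junk value \<open>0\<close>.
\<close>

lemma quantile_eq_of_continuous_mono:
  fixes F :: "real \<Rightarrow> real"
  assumes cont: "continuous_on UNIV F" and mono: "mono F"
    and below: "F x0 < p" and above: "p \<le> F x1"
  shows "F (quantile F p) = p"
proof -
  let ?S = "{x. p \<le> F x}"
  have lower: "x0 \<le> x" if "x \<in> ?S" for x
    using that below monoD[OF mono, of x x0] by force
  then have bdd: "bdd_below ?S" by (rule bdd_belowI[of _ x0]) simp
  have "closed ?S"
    using closed_Collect_le[OF continuous_on_const cont] by simp
  then have in_S: "quantile F p \<in> ?S"
    unfolding quantile_def using above bdd by (intro closed_contains_Inf) auto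
  then obtain y where y: "x0 \<le> y" "y \<le> quantile F p" "F y = p"
    using IVT[of F x0 p "quantile F p"] lower below cont
    by (force simp: continuous_on_eq_continuous_at)
  then have "quantile F p \<le> y"
    unfolding quantile_def by (intro cInf_lower bdd) simp
  then show ?thesis using y by simp
qed

lemma last_zero_before:
  fixes u :: "real \<Rightarrow> real"
  assumes cont: "continuous_on {a..b} u" and "a \<le> b" "u a = 0" "u b \<noteq> 0"
  obtains z where "a \<le> z" "z < b" "u z = 0" "\<And>t. z < t \<Longrightarrow> t \<le> b \<Longrightarrow> u t \<noteq> 0"
proof -
  define Z where "Z = {t \<in> {a..b}. u t = 0}"
  have "closed Z"
    unfolding Z_def by (rule continuous_closed_preimage_constant[OF cont]) simp
  moreover have "a \<in> Z" and bdd: "bdd_above Z"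
    using assms by (auto simp: Z_def intro: bdd_aboveI[of _ b])
  ultimately have Sup_in: "Sup Z \<in> Z"
    by (intro closed_contains_Sup) auto
  then have "Sup Z \<noteq> b" using assms by (auto simp: Z_def)
  moreover have "u t \<noteq> 0" if "Sup Z < t" "t \<le> b" for t
    using cSup_upper[OF _ bdd, of t] that Sup_in by (force simp: Z_def)
  ultimately show ?thesis
    using Sup_in by (intro that[of "Sup Z"]) (auto simp: Z_def)
qed

lemma eventually_at_right_le_linear:
  fixes u :: "real \<Rightarrow> real"
  assumes "(u has_real_derivative D) (at a)" and "D < c"
  shows "\<forall>\<^sub>F t in at_right a. u t - u a \<le> c * (t - a)"
proof -
  have "((\<lambda>t. (u t - u a) / (t - a)) \<longlongrightarrow> D) (at_right a)"
    using assms(1) has_field_derivative_iff has_field_derivative_at_within by blast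
  then have "\<forall>\<^sub>F t in at_right a. (u t - u a) / (t - a) < c"
    using assms(2) by (rule order_tendstoD)
  moreover have "\<forall>\<^sub>F t in at_right a. a < t"
    by (simp add: eventually_at_right_less)
  ultimately show ?thesis
    by eventually_elim (simp add: divide_less_eq mult.commute)
qed

lemma not_bdd_below_of_deriv_ge_inverse_distance:
  fixes G G' :: "real \<Rightarrow> real"
  assumes "0 < c" "a < b"
    and deriv: "\<And>t. a < t \<Longrightarrow> t < b \<Longrightarrow> (G has_real_derivative G' t) (at t)"
    and deriv_ge: "\<And>t. a < t \<Longrightarrow> t < b \<Longrightarrow> 1 / (c * (t - a)) \<le> G' t"
  shows "\<not> bdd_below (G ` {a<..<b})"
proof
  assume "bdd_below (G ` {a<..<b})"
  then obtain B where B: "\<forall>t\<in>{a<..<b}. B \<le> G t"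
    by (auto simp: bdd_below_def)
  \<comment> \<open>\<open>H\<close> is nondecreasing, so \<open>G t \<le> H m + ln (t - a) / c \<rightarrow> -\<infinity>\<close> as \<open>t \<rightarrow> a\<^sup>+\<close>.\<close>
  define H where "H t = G t - ln (t - a) / c" for t
  define m where "m = (a + b) / 2"
  have H_deriv: "(H has_real_derivative G' s - 1 / (c * (s - a))) (at s)" if "a < s" "s < b" for s
    unfolding H_def using that \<open>0 < c\<close>
    by (auto intro!: derivative_eq_intros deriv)
  have H_le: "H t \<le> H m" if "a < t" "t \<le> m" for t
    using that \<open>a < b\<close> deriv_ge
    by (intro deriv_nonneg_imp_mono[OF H_deriv]) (auto simp: m_def)
  define t where "t = a + min (m - a) (exp (c * (B - H m)) / 2)"
  have t: "a < t" "t \<le> m" "t < b"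
    using \<open>a < b\<close> unfolding t_def m_def by (auto simp: min_def field_simps)
  have "ln (t - a) < ln (exp (c * (B - H m)))"
    using t by (subst ln_less_cancel_iff) (auto simp: t_def min_less_iff_disj)
  then have "ln (t - a) / c < B - H m"
    using \<open>0 < c\<close> by (simp add: divide_less_eq mult.commute)
  then have "G t < B"
    using H_le[OF t(1,2)] by (simp add: H_def)
  then show False using B t by force
qed

lemma eventually_le_self_of_deriv_tendsto_0:
  fixes u g :: "real \<Rightarrow> real"
  assumes deriv: "\<forall>\<^sub>F x in at_top. (u has_real_derivative g x) (at x)"
    and "(g \<longlongrightarrow> 0) at_top"
  shows "\<forall>\<^sub>F x in at_top. u x \<le> x"
proof -
  have "\<forall>\<^sub>F x in at_top. g x < 1 / 2"
    using assms(2) by (rule order_tendstoD) simp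
  with deriv have "\<forall>\<^sub>F x in at_top. (u has_real_derivative g x) (at x) \<and> g x < 1 / 2"
    by eventually_elim simp
  then obtain X where X: "\<And>x. X \<le> x \<Longrightarrow> (u has_real_derivative g x) (at x) \<and> g x < 1 / 2"
    unfolding eventually_at_top_linorder by blast
  have growth: "u x - x / 2 \<le> u X - X / 2" if "X \<le> x" for x
  proof (rule deriv_nonpos_imp_antimono[where g = "\<lambda>t. u t - t / 2" and g' = "\<lambda>s. g s - 1 / 2"])
    fix s assume "s \<in> {X..x}"
    then show "((\<lambda>t. u t - t / 2) has_real_derivative g s - 1 / 2) (at s)" "g s - 1 / 2 \<le> 0"
      using X[of s] by (auto intro!: derivative_eq_intros)
  qed (use that in simp)
  have "u x \<le> x" if "max X (2 * u X - X) \<le> x" for x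
    using growth[of x] that by linarith
  then show ?thesis
    unfolding eventually_at_top_linorder by blast
qed

locale cdf_density =
  fixes F f :: "real \<Rightarrow> real"
  assumes density_nonneg: "\<And>x. 0 \<le> f x"
    and has_integral_cdf: "\<And>x. (f has_integral F x) {..x}"
    and has_integral_density: "(f has_integral 1) UNIV"
begin

lemma integrable_on_interval: "f integrable_on {x..y}"
  using integrable_on_subcbox[of f UNIV x y] has_integral_density by auto

lemma cdf_diff_eq_integral:
  assumes "x \<le> y"
  shows "F y - F x = integral {x..y} f"
proof -
  have "(f has_integral (F x + integral {x..y} f)) ({..x} \<union> {x..y})"
    by (rule has_integral_Un[OF has_integral_cdf integrable_integral[OF integrable_on_interval]])
       (rule negligible_subset[of "{x}"], auto)
  moreover have "{..x} \<union> {x..y} = {..y}" using assms by auto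
  ultimately have "(f has_integral (F x + integral {x..y} f)) {..y}" by simp
  then have "F y = F x + integral {x..y} f"
    using has_integral_cdf has_integral_unique by blast
  then show ?thesis by simp
qed

lemma mono_cdf: "mono F"
proof (intro monoI)
  fix x y :: real
  assume "x \<le> y"
  then show "F x \<le> F y"
    using cdf_diff_eq_integral[of x y] integral_nonneg[OF integrable_on_interval density_nonneg, of x y]
    by linarith
qed

lemma cdf_nonneg: "0 \<le> F x"
  using has_integral_nonneg[OF has_integral_cdf] density_nonneg by blast

lemma has_real_derivative_cdf:
  assumes "continuous_on S f" "open S" "x \<in> S"
  shows "(F has_real_derivative f x) (at x)"
proof -
  obtain r where r: "0 < r" "cball x r \<subseteq> S"
    using assms(2,3) open_contains_cball by blast
  then have r: "0 < r" "{x - r..x + r} \<subseteq> S"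
    by (simp_all only: cball_eq_atLeastAtMost)
  have deriv: "((\<lambda>t. F (x - r) + integral {x - r..t} f) has_real_derivative f x)
      (at x within {x - r..x + r})"
    using integral_has_real_derivative[OF continuous_on_subset[OF assms(1) r(2)], of x] r(1)
    by (auto intro!: derivative_eq_intros)
  have eq: "F (x - r) + integral {x - r..t} f = F t" if "t \<in> {x - r..x + r}" for t
    using cdf_diff_eq_integral[of "x - r" t] that by simp
  have "(F has_real_derivative f x) (at x within {x - r..x + r})"
    by (rule has_field_derivative_transform_within[OF deriv r(1)]) (use r(1) eq in auto)
  moreover have "at x within {x - r..x + r} = at x"
    using r(1) by (intro at_within_interior) simp
  ultimately show ?thesis by simp
qed

lemma continuous_cdf: "continuous_on UNIV F"
  unfolding continuous_on_eq_continuous_at[OF open_UNIV]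
proof
  fix x :: real
  have "continuous_on {x - 1..x + 1} (\<lambda>t. F (x - 1) + integral {x - 1..t} f)"
    by (intro continuous_intros indefinite_integral_continuous_1 integrable_on_interval)
  then have "continuous_on {x - 1..x + 1} F"
    by (rule continuous_on_eq) (use cdf_diff_eq_integral in force)
  then show "isCont F x"
    by (rule continuous_on_interior) simp
qed

lemma cdf_exceeds:
  assumes "q < 1"
  obtains x where "q < F x"
proof -
  have "\<forall>e>0. \<exists>B>0. \<forall>a b. ball 0 B \<subseteq> cbox a b \<longrightarrow> norm (integral (cbox a b) f - 1) < e"
    using has_integral_density[unfolded has_integral_alt'[of f 1 UNIV]] by simp
  moreover have "0 < 1 - q" using assms by simp
  ultimately obtain B where
    B: "\<And>a b. ball 0 B \<subseteq> cbox a b \<Longrightarrow> norm (integral (cbox a b) f - 1) < 1 - q"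
    by blast
  have "ball 0 B \<subseteq> cbox (-B) B" by (auto simp: dist_real_def)
  from B[OF this] have "q < integral {-B..B} f" by auto
  also have "integral {-B..B} f \<le> integral {..B} f"
    by (rule integral_subset_le) (use integrable_on_interval has_integral_cdf density_nonneg in auto)
  also have "\<dots> = F B"
    using has_integral_cdf by (rule integral_unique)
  finally show ?thesis by (rule that)
qed

lemma density_pos_beyond:
  assumes "F x < 1"
  obtains y where "x \<le> y" "0 < f y"
proof -
  have "\<exists>y\<ge>x. 0 < f y"
  proof (rule ccontr)
    assume "\<not> ?thesis"
    then have "f y = 0" if "x \<le> y" for y
      using that density_nonneg[of y] by force
    then have "(\<lambda>y. if y \<in> {..x} then f y else 0) = f" by auto
    then have "(f has_integral 1) {..x}"
      using has_integral_density has_integral_restrict_UNIV[of "{..x}" f 1] by simp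
    then have "F x = 1"
      using has_integral_cdf has_integral_unique by blast
    with assms show False by simp
  qed
  then show ?thesis using that by blast
qed

lemma cdf_quantile:
  assumes "F x0 < p" "p < 1"
  shows "F (quantile F p) = p"
proof -
  obtain x1 where "p < F x1" using cdf_exceeds assms(2) .
  then show ?thesis
    using quantile_eq_of_continuous_mono[OF continuous_cdf mono_cdf assms(1)] by (meson less_imp_le)
qed

end

locale unbounded_cdf_density = cdf_density +
  assumes cdf_less_one: "\<And>x. F x < 1"
begin

lemma has_real_derivative_neg_ln_survival:
  assumes "continuous_on S f" "open S" "x \<in> S"
  shows "((\<lambda>t. - ln (1 - F t)) has_real_derivative hazard f F x) (at x)"
proof -
  have "((\<lambda>t. - ln (1 - F t)) has_real_derivative - (1 / (1 - F x) * (0 - f x))) (at x)"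
    by (rule derivative_eq_intros has_real_derivative_cdf[OF assms] refl
        | use cdf_less_one[of x] in simp)+
  then show ?thesis by (simp add: hazard_def)
qed

lemma continuous_on_density_of_inverse_hazard:
  assumes "continuous_on S (\<lambda>t. 1 / hazard f F t)" and "\<And>t. t \<in> S \<Longrightarrow> 0 < 1 / hazard f F t"
  shows "continuous_on S f"
proof -
  have "continuous_on S (\<lambda>t. (1 - F t) / (1 / hazard f F t))"
  proof (rule continuous_on_divide[OF _ assms(1)])
    show "continuous_on S (\<lambda>t. 1 - F t)"
      by (intro continuous_intros continuous_on_subset[OF continuous_cdf]) simp
  qed (use assms(2) in force)
  then show ?thesis
    by (rule continuous_on_eq) (use assms(2) cdf_less_one in \<open>force simp: hazard_def\<close>)
qed

text \<open>
  Since \<open>x / 0 = 0\<close>, the hypothesis does not exclude zeros of \<open>f\<close>. At the last zero \<open>z\<close>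
  of \<open>1/h\<close> before a point where \<open>f > 0\<close>, differentiability gives \<open>1/h(t) \<le> c (t - z)\<close>
  just right of \<open>z\<close>; then \<open>-ln (1 - F)\<close>, whose derivative is \<open>h\<close>, would be unbounded
  below there, although it is nonnegative.
\<close>
lemma density_pos_of_inverse_hazard_deriv:
  assumes deriv: "\<And>x. X < x \<Longrightarrow> ((\<lambda>t. 1 / hazard f F t) has_real_derivative u' x) (at x)"
    and "X < x0"
  shows "0 < f x0"
proof (rule ccontr)
  define u where "u = (\<lambda>t. 1 / hazard f F t)"
  have u_eq: "u t = (1 - F t) / f t" for t
    by (simp add: u_def hazard_def)
  have u_zero_iff: "u t = 0 \<longleftrightarrow> f t = 0" for t
    using cdf_less_one[of t] by (simp add: u_eq)
  have u_nonneg: "0 \<le> u t" for t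
    using cdf_less_one[of t] density_nonneg[of t] by (simp add: u_eq)
  have u_deriv: "(u has_real_derivative u' x) (at x)" if "X < x" for x
    using deriv[OF that] by (simp add: u_def)
  have u_cont: "continuous_on {X<..} u"
    using u_deriv by (intro continuous_at_imp_continuous_on) (auto intro: DERIV_isCont)
  assume "\<not> 0 < f x0"
  then have "u x0 = 0" using density_nonneg[of x0] u_zero_iff by simp
  obtain y where y: "x0 \<le> y" "0 < f y"
    using density_pos_beyond[OF cdf_less_one] .
  have "continuous_on {x0..y} u"
    by (rule continuous_on_subset[OF u_cont]) (use \<open>X < x0\<close> in auto)
  moreover have "u y \<noteq> 0" using y(2) u_zero_iff by simp
  ultimately obtain z where "x0 \<le> z" "z < y" "u z = 0" and u_ne: "\<And>t. z < t \<Longrightarrow> t \<le> y \<Longrightarrow> u t \<noteq> 0"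
    using last_zero_before[of x0 y u] y(1) \<open>u x0 = 0\<close> by blast
  with \<open>X < x0\<close> have z: "X < z" "z < y" "u z = 0" by auto
  have u_pos: "0 < u t" if "z < t" "t < y" for t
    using u_ne[of t] that u_nonneg[of t] by force
  define c where "c = \<bar>u' z\<bar> + 1"
  have "\<forall>\<^sub>F t in at_right z. u t - u z \<le> c * (t - z)"
    using u_deriv[OF z(1)] by (rule eventually_at_right_le_linear) (simp add: c_def)
  then obtain b where "z < b" and u_le: "\<And>t. z < t \<Longrightarrow> t < b \<Longrightarrow> u t \<le> c * (t - z)"
    using z(3) by (auto simp: eventually_at_right_field)
  have f_cont: "continuous_on {z<..<y} f"
    using z(1) u_pos unfolding u_def
    by (intro continuous_on_density_of_inverse_hazard continuous_on_subset[OF u_cont[unfolded u_def]])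
       auto
  have "\<not> bdd_below ((\<lambda>t. - ln (1 - F t)) ` {z<..<min b y})"
  proof (rule not_bdd_below_of_deriv_ge_inverse_distance[where G' = "hazard f F"])
    fix t assume t: "z < t" "t < min b y"
    then show "((\<lambda>t. - ln (1 - F t)) has_real_derivative hazard f F t) (at t)"
      by (intro has_real_derivative_neg_ln_survival[OF f_cont]) auto
    have "hazard f F t = 1 / u t" using u_pos[of t] t by (simp add: u_def)
    then show "1 / (c * (t - z)) \<le> hazard f F t"
      using u_pos[of t] u_le[of t] t by (simp add: frac_le)
  qed (use \<open>z < b\<close> z(2) in \<open>auto simp: c_def\<close>)
  moreover have "bdd_below ((\<lambda>t. - ln (1 - F t)) ` {z<..<min b y})"
    using cdf_nonneg cdf_less_one by (intro bdd_belowI2[of _ 0]) simp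
  ultimately show False by contradiction
qed

lemma eventually_hazard_lower_bound:
  assumes "(\<exists>c0>0. ((\<lambda>x. x * hazard f F x) \<longlongrightarrow> c0) at_top)
      \<or> (\<exists>g. (\<forall>\<^sub>F x in at_top. ((\<lambda>t. 1 / hazard f F t) has_real_derivative g x) (at x))
          \<and> (g \<longlongrightarrow> 0) at_top)"
  shows "\<exists>c>0. \<forall>\<^sub>F x in at_top. c \<le> x * hazard f F x"
  using assms
proof
  assume "\<exists>c0>0. ((\<lambda>x. x * hazard f F x) \<longlongrightarrow> c0) at_top"
  then obtain c0 where "0 < c0" and lim: "((\<lambda>x. x * hazard f F x) \<longlongrightarrow> c0) at_top"
    by blast
  have "\<forall>\<^sub>F x in at_top. c0 / 2 < x * hazard f F x"
    using lim by (rule order_tendstoD) (use \<open>0 < c0\<close> in simp)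
  then show ?thesis
    using \<open>0 < c0\<close> by (intro exI[of _ "c0 / 2"]) (auto elim: eventually_mono)
next
  assume "\<exists>g. (\<forall>\<^sub>F x in at_top. ((\<lambda>t. 1 / hazard f F t) has_real_derivative g x) (at x))
      \<and> (g \<longlongrightarrow> 0) at_top"
  then obtain g where deriv: "\<forall>\<^sub>F x in at_top. ((\<lambda>t. 1 / hazard f F t) has_real_derivative g x) (at x)"
    and "(g \<longlongrightarrow> 0) at_top"
    by blast
  then obtain X where "\<And>x. X \<le> x \<Longrightarrow> ((\<lambda>t. 1 / hazard f F t) has_real_derivative g x) (at x)"
    unfolding eventually_at_top_linorder by blast
  then have f_pos: "0 < f x" if "X < x" for x
    using that by (intro density_pos_of_inverse_hazard_deriv[of X g]) auto
  have "\<forall>\<^sub>F x in at_top. 1 / hazard f F x \<le> x"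
    using deriv \<open>(g \<longlongrightarrow> 0) at_top\<close> by (rule eventually_le_self_of_deriv_tendsto_0)
  moreover have "\<forall>\<^sub>F x in at_top. max X 0 < x" by (rule eventually_gt_at_top)
  ultimately have "\<forall>\<^sub>F x in at_top. 1 \<le> x * hazard f F x"
  proof eventually_elim
    case (elim x)
    have "0 < hazard f F x"
      using f_pos[of x] cdf_less_one[of x] elim(2) by (simp add: hazard_def)
    then show ?case using elim by (simp add: field_simps)
  qed
  then show ?thesis by (intro exI[of _ 1]) simp
qed

lemma quantile_upper_tail:
  fixes q :: "'a \<Rightarrow> real"
  assumes "(q \<longlongrightarrow> 0) G" and "\<forall>\<^sub>F n in G. 0 < q n"
  shows "\<forall>\<^sub>F n in G. F (quantile F (1 - q n)) = 1 - q n"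
    and "filterlim (\<lambda>n. quantile F (1 - q n)) at_top G"
proof -
  have below: "\<forall>\<^sub>F n in G. F M < 1 - q n" for M
    using order_tendstoD(2)[OF assms(1), of "1 - F M"] cdf_less_one[of M]
    by (auto elim: eventually_mono)
  show quantile: "\<forall>\<^sub>F n in G. F (quantile F (1 - q n)) = 1 - q n"
    using below[of 0] assms(2) by eventually_elim (simp add: cdf_quantile)
  show "filterlim (\<lambda>n. quantile F (1 - q n)) at_top G"
    unfolding filterlim_at_top
  proof
    fix M
    show "\<forall>\<^sub>F n in G. M \<le> quantile F (1 - q n)"
      using below[of M] quantile
    proof eventually_elim
      case (elim n)
      show ?case
      proof (rule ccontr)
        assume "\<not> M \<le> quantile F (1 - q n)"
        then have "F (quantile F (1 - q n)) \<le> F M"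
          using mono_cdf by (simp add: monoD)
        with elim show False by simp
      qed
    qed
  qed
qed

end

lemma ratio_eq_hazard_mult_sqrt:
  fixes F f :: "real \<Rightarrow> real"
  assumes "F a = 1 - k / n" "0 < k" "0 < n"
  shows "a / (sqrt k / (n * f a)) = a * hazard f F a * sqrt k"
proof -
  have "n * f a = hazard f F a * k"
    using assms by (simp add: hazard_def)
  then have "a / (sqrt k / (n * f a)) = a * hazard f F a * (k / sqrt k)"
    by simp
  also have "k / sqrt k = sqrt k"
    using assms(2) by (simp add: real_div_sqrt)
  finally show ?thesis .
qed

theorem lemma2:
  fixes F f :: "real \<Rightarrow> real" and i :: "nat \<Rightarrow> nat"
  assumes f_nonneg: "\<And>x. f x \<ge> 0"
    and f_density: "\<And>x. (f has_integral F x) {..x}"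
    and f_total: "(f has_integral 1) UNIV"
    and unbounded: "\<And>x. F x < 1"
    and cond_ii: "(\<exists>c0>0. ((\<lambda>x. x * hazard f F x) \<longlongrightarrow> c0) at_top)
                 \<or> (\<exists>g. (\<forall>\<^sub>F x in at_top. ((\<lambda>t. 1 / hazard f F t) has_real_derivative g x) (at x))
                        \<and> (g \<longlongrightarrow> 0) at_top)"
    and i_inf: "filterlim i at_top sequentially"
    and i_small: "(\<lambda>n. real (i n) / real n) \<longlonglongrightarrow> 0"
  shows "filterlim
           (\<lambda>n. quantile F (1 - real (i n) / real n)
                 / (sqrt (real (i n)) / (real n * f (quantile F (1 - real (i n) / real n)))))
           at_top sequentially"
proof -
  interpret unbounded_cdf_density F f
    using f_nonneg f_density f_total unbounded by unfold_locales
  obtain c where "0 < c" and hazard_ge: "\<forall>\<^sub>F x in at_top. c \<le> x * hazard f F x"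
    using eventually_hazard_lower_bound[OF cond_ii] by blast
  define a where "a n = quantile F (1 - real (i n) / real n)" for n
  have i_pos: "\<forall>\<^sub>F n in sequentially. 0 < i n"
    using eventually_gt_at_top i_inf by (rule eventually_compose_filterlim)
  then have q_pos: "\<forall>\<^sub>F n in sequentially. 0 < real (i n) / real n"
    using eventually_gt_at_top[of "0::nat"] by eventually_elim simp
  note tail = quantile_upper_tail[OF i_small q_pos, folded a_def]
  have "filterlim (\<lambda>n. c * sqrt (real (i n))) at_top sequentially"
    using \<open>0 < c\<close> filterlim_compose[OF sqrt_at_top filterlim_compose[OF filterlim_real_sequentially i_inf]]
    by (rule filterlim_tendsto_pos_mult_at_top[OF tendsto_const])
  moreover have "\<forall>\<^sub>F n in sequentially. c * sqrt (real (i n)) \<le> a n / (sqrt (real (i n)) / (real n * f (a n)))"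
    using eventually_compose_filterlim[OF hazard_ge tail(2)] tail(1) i_pos q_pos
  proof eventually_elim
    case (elim n)
    then have "a n / (sqrt (real (i n)) / (real n * f (a n))) = a n * hazard f F (a n) * sqrt (real (i n))"
      by (intro ratio_eq_hazard_mult_sqrt) (auto simp: zero_less_divide_iff)
    with elim(1) show ?case by (simp add: mult_right_mono)
  qed
  ultimately show ?thesis
    unfolding a_def by (rule filterlim_at_top_mono)
qed

end
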